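(* Let $(\mathcal K,[\cdot,\cdot])$ be a Krein space and let $T$ be a closed, densely defined linear operator in $\mathcal K$ such that $\rho(T^{[*]}T)\neq\emptyset$ and $\rho(TT^{[*]})\neq\emptyset$. Then $$\sigma(T^{[*]}T)\setminus\{0\}=\sigma(TT^{[*]})\setminus\{0\},$$ and there exists a constant $C>0$ depending only on $T$ such that for all $\lambda,\mu\in\rho(T^{[*]}T)$ with $\lambda\neq0$, $$\|(T^{[*]}T-\lambda)^{-1}\|\le\frac{C\,M_1(\lambda)M_2(\mu)}{|\lambda|}\Big(|\mu|+|\lambda-\mu|\,(2+|\lambda|)(2+|\mu|)\Big),$$ where $M_1(\lambda):=\max\{1,\|(TT^{[*]}-\lambda)^{-1}\|\}$ and $M_2(\mu):=\max\{1,\|(T^{[*]}T-\mu)^{-1}\|\}$.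
   Context: $\mathcal K$ is equipped with a Banach norm $\|\cdot\|$ for which $[\cdot,\cdot]$ is continuous. $T^{[*]}$ is the Krein space adjoint of $T$; products have natural domains. For an operator $S$ in $\mathcal K$, $\rho(S)$ is the set of $\lambda\in\mathbb C$ with $S-\lambda:\operatorname{dom}S\to\mathcal K$ bijective and $(S-\lambda)^{-1}$ bounded; $\sigma(S)=\mathbb C\setminus\rho(S)$. *)

theory Defs
  imports "HOL-Analysis.Analysis"
begin

text \<open>HOL-Analysis has no complex vector spaces.  A complex Banach space is modelled
  as a real Banach space of type 'a together with a map J (multiplication by i).\<close>

definition cscale :: "('a::real_vector \<Rightarrow> 'a) \<Rightarrow> complex \<Rightarrow> 'a \<Rightarrow> 'a" where
  "cscale J c x = Re c *\<^sub>R x + Im c *\<^sub>R J x"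

definition complex_structure :: "('a::real_normed_vector \<Rightarrow> 'a) \<Rightarrow> bool" where
  "complex_structure J \<longleftrightarrow> linear J \<and> (\<forall>x. J (J x) = - x)
     \<and> (\<forall>c x. norm (cscale J c x) = cmod c * norm x)"

definition csubspace :: "('a::real_vector \<Rightarrow> 'a) \<Rightarrow> 'a set \<Rightarrow> bool" where
  "csubspace J S \<longleftrightarrow> 0 \<in> S \<and> (\<forall>x\<in>S. \<forall>y\<in>S. x + y \<in> S)
     \<and> (\<forall>c. \<forall>x\<in>S. cscale J c x \<in> S)"

definition hermitian_form :: "('a::real_vector \<Rightarrow> 'a) \<Rightarrow> ('a \<Rightarrow> 'a \<Rightarrow> complex) \<Rightarrow> bool" where
  "hermitian_form J ip \<longleftrightarrow>
     (\<forall>x y z. ip (x + y) z = ip x z + ip y z)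
   \<and> (\<forall>c x y. ip (cscale J c x) y = c * ip x y)
   \<and> (\<forall>x y. ip y x = cnj (ip x y))"

definition hilbert_part :: "('a::real_vector \<Rightarrow> 'a \<Rightarrow> complex) \<Rightarrow> real \<Rightarrow> 'a set \<Rightarrow> bool" where
  "hilbert_part ip s S \<longleftrightarrow>
     (\<forall>x\<in>S. x \<noteq> 0 \<longrightarrow> s * Re (ip x x) > 0)
   \<and> (\<forall>X::nat \<Rightarrow> 'a. (\<forall>n. X n \<in> S) \<and>
          (\<forall>e>0. \<exists>N. \<forall>m\<ge>N. \<forall>n\<ge>N. s * Re (ip (X m - X n) (X m - X n)) < e)
        \<longrightarrow> (\<exists>x\<in>S. \<forall>e>0. \<exists>N. \<forall>n\<ge>N. s * Re (ip (X n - x) (X n - x)) < e))"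

definition krein_space :: "('a::{real_normed_vector,banach} \<Rightarrow> 'a) \<Rightarrow> ('a \<Rightarrow> 'a \<Rightarrow> complex) \<Rightarrow> bool" where
  "krein_space J ip \<longleftrightarrow> complex_structure J \<and> hermitian_form J ip
   \<and> (\<exists>c. \<forall>x y. cmod (ip x y) \<le> c * norm x * norm y)
   \<and> (\<exists>Kp Km. csubspace J Kp \<and> csubspace J Km \<and> Kp \<inter> Km = {0}
        \<and> (\<forall>x. \<exists>p\<in>Kp. \<exists>m\<in>Km. x = p + m)
        \<and> (\<forall>p\<in>Kp. \<forall>m\<in>Km. ip p m = 0)
        \<and> hilbert_part ip 1 Kp \<and> hilbert_part ip (-1) Km)"

type_synonym 'a lop = "'a set \<times> ('a \<Rightarrow> 'a)"

definition linear_op :: "('a::real_vector \<Rightarrow> 'a) \<Rightarrow> 'a lop \<Rightarrow> bool" where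
  "linear_op J T \<longleftrightarrow> csubspace J (fst T)
   \<and> (\<forall>x\<in>fst T. \<forall>y\<in>fst T. snd T (x + y) = snd T x + snd T y)
   \<and> (\<forall>c. \<forall>x\<in>fst T. snd T (cscale J c x) = cscale J c (snd T x))"

definition closed_op :: "('a::topological_space) lop \<Rightarrow> bool" where
  "closed_op T \<longleftrightarrow> closed {(x, snd T x) | x. x \<in> fst T}"

definition densely_defined :: "('a::topological_space) lop \<Rightarrow> bool" where
  "densely_defined T \<longleftrightarrow> closure (fst T) = UNIV"

definition kadj :: "('a \<Rightarrow> 'a \<Rightarrow> complex) \<Rightarrow> 'a lop \<Rightarrow> 'a lop" where
  "kadj ip T = ({y. \<exists>z. \<forall>x\<in>fst T. ip (snd T x) y = ip x z},
               (\<lambda>y. THE z. \<forall>x\<in>fst T. ip (snd T x) y = ip x z))"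

definition op_comp :: "'a lop \<Rightarrow> 'a lop \<Rightarrow> 'a lop" where
  "op_comp A B = ({x \<in> fst B. snd B x \<in> fst A}, snd A \<circ> snd B)"

definition resolvent :: "('a::real_vector \<Rightarrow> 'a) \<Rightarrow> 'a lop \<Rightarrow> complex \<Rightarrow> 'a \<Rightarrow> 'a" where
  "resolvent J S l = the_inv_into (fst S) (\<lambda>x. snd S x - cscale J l x)"

definition resolvent_set :: "('a::real_normed_vector \<Rightarrow> 'a) \<Rightarrow> 'a lop \<Rightarrow> complex set" where
  "resolvent_set J S = {l. bij_betw (\<lambda>x. snd S x - cscale J l x) (fst S) UNIV
       \<and> (\<exists>C. \<forall>y. norm (resolvent J S l y) \<le> C * norm y)}"

definition spectrum_op :: "('a::real_normed_vector \<Rightarrow> 'a) \<Rightarrow> 'a lop \<Rightarrow> complex set" where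
  "spectrum_op J S = - resolvent_set J S"

end

theory Submission
  imports Defs
begin

text \<open>
  Write A = T and B = T[*].  The whole argument works for two closed linear operators A, B in a
  complex Banach space.  For l \<noteq> 0 with l \<in> \<rho>(AB) and any m \<in> \<rho>(BA) one checks by pure algebra
  that
     (BA - l)\<inverse> = R(m) + ((l - m)/l) (B (AB - l)\<inverse> A R(m) - R(m)),     R(m) = (BA - m)\<inverse>,
  and the right-hand side is bounded because, by the closed graph theorem, A times a resolvent of BA
  and B times a resolvent of AB are bounded.  Applying this with the roles of A and B exchanged
  shows \<sigma>(BA) - {0} = \<sigma>(AB) - {0}.  Estimating the same formula, where the bounded operators
  A R(m) and B (AB - l)\<inverse> are reduced to fixed reference points n0 \<in> \<rho>(BA), n1 \<in> \<rho>(AB) by the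
  resolvent identity, gives the norm estimate.
\<close>

section \<open>A closed graph theorem\<close>

text \<open>The closure of a sublevel set of the norm of a linear map is stable under (a - b)/2; this
  lets a ball found by Baire category be recentred at the origin.\<close>
lemma closure_sublevel_half_diff:
  fixes f :: "'a::real_normed_vector \<Rightarrow> 'b::real_normed_vector"
  assumes lin: "linear f"
    and a: "a \<in> closure {x. norm (f x) \<le> c}" and b: "b \<in> closure {x. norm (f x) \<le> c}"
  shows "(1/2) *\<^sub>R (a - b) \<in> closure {x. norm (f x) \<le> c}"
proof -
  obtain A where A: "\<And>n. A n \<in> {x. norm (f x) \<le> c}" "A \<longlonglongrightarrow> a"
    using a closure_sequential by blast
  obtain B where B: "\<And>n. B n \<in> {x. norm (f x) \<le> c}" "B \<longlonglongrightarrow> b"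
    using b closure_sequential by blast
  have "norm (f ((1/2) *\<^sub>R (A n - B n))) \<le> c" for n
  proof -
    have "norm (f ((1/2) *\<^sub>R (A n - B n))) = (1/2) * norm (f (A n) - f (B n))"
      by (simp add: linear_scale[OF lin] linear_diff[OF lin])
    also have "\<dots> \<le> (1/2) * (norm (f (A n)) + norm (f (B n)))"
      by (simp add: norm_triangle_ineq4)
    also have "\<dots> \<le> c" using A(1)[of n] B(1)[of n] by simp
    finally show ?thesis .
  qed
  moreover have "(\<lambda>n. (1/2) *\<^sub>R (A n - B n)) \<longlonglongrightarrow> (1/2) *\<^sub>R (a - b)"
    by (intro tendsto_intros A B)
  ultimately show ?thesis
    unfolding closure_sequential by (intro exI[of _ "\<lambda>n. (1/2) *\<^sub>R (A n - B n)"]) auto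
qed

lemma banach_closed_cover_ball:
  fixes F :: "nat \<Rightarrow> 'a::banach set"
  assumes cl: "\<And>n. closed (F n)" and cover: "\<Union>(range F) = UNIV"
  obtains n x0 r where "r > 0" "ball x0 r \<subseteq> F n"
proof -
  have "\<exists>T\<in>range F. \<not> (closedin Met_TC.mtopology T \<and> Met_TC.mtopology interior_of T = {})"
  proof (rule ccontr)
    assume "\<not> ?thesis"
    then have "Met_TC.mtopology interior_of \<Union>(range F) = {}"
      by (intro Met_TC.metric_Baire_category_alt) auto
    with cover show False by (simp add: euclidean_interior_of)
  qed
  then obtain n where "interior (F n) \<noteq> {}"
    using cl by (auto simp: euclidean_interior_of)
  then obtain y where "y \<in> interior (F n)" by blast
  then obtain r where "r > 0" "ball y r \<subseteq> F n"
    using open_contains_ball[of "interior (F n)"] interior_subset[of "F n"] by blast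
  then show ?thesis by (rule that)
qed

lemma linear_sublevel_closure_ball:
  fixes f :: "'a::banach \<Rightarrow> 'b::real_normed_vector"
  assumes lin: "linear f"
  obtains c r where "c \<ge> 0" "r > 0" "\<And>z. norm z < r \<Longrightarrow> z \<in> closure {x. norm (f x) \<le> c}"
proof -
  define F where "F n = closure {x. norm (f x) \<le> real n}" for n :: nat
  have "x \<in> \<Union>(range F)" for x
  proof -
    obtain n :: nat where "norm (f x) \<le> real n" using real_arch_simple by auto
    then have "x \<in> F n" unfolding F_def by (simp add: closure_subset[THEN subsetD])
    then show ?thesis by blast
  qed
  then have cover: "\<Union>(range F) = UNIV" by blast
  have "closed (F n)" for n unfolding F_def by simp
  then obtain n x0 r where r: "r > 0" "ball x0 r \<subseteq> F n"
    using banach_closed_cover_ball[OF _ cover] by blast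
  have "z \<in> closure {x. norm (f x) \<le> real n}" if "norm z < r" for z
  proof -
    have "dist x0 (x0 + z) < r" "dist x0 (x0 - z) < r" using that by (simp_all add: dist_norm)
    then have "x0 + z \<in> F n" "x0 - z \<in> F n" using r(2) by auto
    then have "(1/2) *\<^sub>R ((x0 + z) - (x0 - z)) \<in> closure {x. norm (f x) \<le> real n}"
      unfolding F_def by (rule closure_sublevel_half_diff[OF lin])
    moreover have "(1/2) *\<^sub>R ((x0 + z) - (x0 - z)) = z" by (simp add: scaleR_2[symmetric])
    ultimately show ?thesis by simp
  qed
  then show ?thesis using r(1) by (intro that[of "real n" r]) auto
qed

lemma linear_approximately_bounded:
  fixes f :: "'a::banach \<Rightarrow> 'b::real_normed_vector"
  assumes lin: "linear f"
  obtains M where "M \<ge> 0" "\<And>z e. e > 0 \<Longrightarrow> \<exists>w. norm (f w) \<le> M * norm z \<and> norm (z - w) < e"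
proof -
  obtain c r where c: "c \<ge> 0" and r: "r > 0"
    and ball: "\<And>z. norm z < r \<Longrightarrow> z \<in> closure {x. norm (f x) \<le> c}"
    using linear_sublevel_closure_ball[OF lin] by blast
  define M where "M = 2 * c / r"
  have "\<exists>w. norm (f w) \<le> M * norm z \<and> norm (z - w) < e" if e: "e > 0" for z e
  proof (cases "z = 0")
    case True then show ?thesis using e by (intro exI[of _ 0]) (simp add: linear_0[OF lin])
  next
    case False
    define s where "s = r / (2 * norm z)"
    have s0: "s > 0" using False r by (simp add: s_def)
    have "norm (s *\<^sub>R z) < r" using False r by (simp add: s_def)
    then have "s *\<^sub>R z \<in> closure {x. norm (f x) \<le> c}" by (rule ball)
    then obtain a where a: "norm (f a) \<le> c" "dist a (s *\<^sub>R z) < s * e"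
      using closure_approachable s0 e by (metis mem_Collect_eq mult_pos_pos)
    show ?thesis
    proof (intro exI conjI)
      have "norm (f ((1/s) *\<^sub>R a)) = norm (f a) / s"
        using s0 by (simp add: linear_scale[OF lin])
      also have "\<dots> \<le> c / s" using a s0 by (simp add: divide_right_mono)
      also have "\<dots> = M * norm z" using False r by (simp add: s_def M_def field_simps)
      finally show "norm (f ((1/s) *\<^sub>R a)) \<le> M * norm z" .
      have "z - (1/s) *\<^sub>R a = (1/s) *\<^sub>R (s *\<^sub>R z - a)" using s0 by (simp add: algebra_simps)
      then have "norm (z - (1/s) *\<^sub>R a) = norm (s *\<^sub>R z - a) / s" using s0 by simp
      also have "\<dots> < e"
        using a s0 by (simp add: dist_norm norm_minus_commute pos_divide_less_eq mult.commute)
      finally show "norm (z - (1/s) *\<^sub>R a) < e" .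
    qed
  qed
  then show ?thesis using c r by (intro that[of M]) (simp_all add: M_def)
qed

text \<open>Iterating the approximation: subtracting successive approximants w_k of the remainders
  Z_k, with error norm x / 2^(k+1), writes x as a series \<Sum> w_k with geometrically small f w_k.\<close>
lemma approximation_series:
  fixes f :: "'a::real_normed_vector \<Rightarrow> 'b::real_normed_vector"
  assumes lin: "linear f"
    and M0: "M \<ge> 0" and approx: "\<And>z e. e > 0 \<Longrightarrow> \<exists>w. norm (f w) \<le> M * norm z \<and> norm (z - w) < e"
  obtains w where "\<And>k. norm (f (w k)) \<le> M * norm x * (1/2) ^ k" "(\<lambda>N. \<Sum>k<N. w k) \<longlonglongrightarrow> x"
proof (cases "x = 0")
  case True
  then show ?thesis by (intro that[of "\<lambda>_. 0"]) (simp_all add: linear_0[OF lin])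
next
  case False
  have "\<forall>z e. \<exists>w. e > 0 \<longrightarrow> norm (f w) \<le> M * norm z \<and> norm (z - w) < e"
    using approx by blast
  then obtain W where W: "\<And>z e. e > 0 \<Longrightarrow> norm (f (W z e)) \<le> M * norm z \<and> norm (z - W z e) < e"
    by metis
  define Z where "Z = rec_nat x (\<lambda>k z. z - W z (norm x / 2 ^ Suc k))"
  define w where "w k = W (Z k) (norm x / 2 ^ Suc k)" for k
  have Z0: "Z 0 = x" and ZS: "Z (Suc k) = Z k - w k" for k
    by (simp_all add: Z_def w_def)
  have w: "norm (f (w k)) \<le> M * norm (Z k) \<and> norm (Z (Suc k)) < norm x / 2 ^ Suc k" for k
    using W[of "norm x / 2 ^ Suc k" "Z k"] False by (simp add: w_def ZS)
  have Z_small: "norm (Z k) \<le> norm x * (1/2) ^ k" for k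
    using w[of "k - 1"] by (cases k) (simp_all add: Z0 power_divide)
  have fw: "norm (f (w k)) \<le> M * norm x * (1/2) ^ k" for k
    using w[of k] mult_left_mono[OF Z_small[of k] M0] by simp
  have telescope: "(\<Sum>k<N. w k) = x - Z N" for N
    by (induction N) (simp_all add: Z0 ZS)
  have "Z \<longlonglongrightarrow> 0"
  proof (rule Lim_null_comparison[where g="\<lambda>k. norm x * (1/2) ^ k"])
    show "\<forall>\<^sub>F k in sequentially. norm (Z k) \<le> norm x * (1 / 2) ^ k" using Z_small by simp
    show "(\<lambda>k. norm x * (1/2) ^ k) \<longlonglongrightarrow> 0"
      by (intro tendsto_mult_right_zero LIMSEQ_realpow_zero) auto
  qed
  then have "(\<lambda>N. \<Sum>k<N. w k) \<longlonglongrightarrow> x"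
    unfolding telescope using tendsto_diff[of "\<lambda>_. x" x] by fastforce
  with fw show ?thesis by (rule that)
qed

text \<open>For a map with closed graph, f x is then the sum of the f w_k, which is dominated by a
  geometric series.\<close>
lemma approximately_bounded_closed_graph:
  fixes f :: "'a::real_normed_vector \<Rightarrow> 'b::banach"
  assumes lin: "linear f"
    and cl: "\<And>X x z. X \<longlonglongrightarrow> x \<Longrightarrow> (\<lambda>n. f (X n)) \<longlonglongrightarrow> z \<Longrightarrow> f x = z"
    and M0: "M \<ge> 0" and approx: "\<And>z e. e > 0 \<Longrightarrow> \<exists>w. norm (f w) \<le> M * norm z \<and> norm (z - w) < e"
  shows "norm (f x) \<le> 2 * M * norm x"
proof -
  obtain w where fw: "\<And>k. norm (f (w k)) \<le> M * norm x * (1/2) ^ k"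
    and sums: "(\<lambda>N. \<Sum>k<N. w k) \<longlonglongrightarrow> x"
    using approximation_series[OF lin M0 approx] by blast
  have geom: "summable (\<lambda>k. M * norm x * (1/2) ^ k)"
    by (intro summable_mult summable_geometric) simp
  have sn: "summable (\<lambda>k. norm (f (w k)))"
    by (rule summable_comparison_test[OF _ geom]) (use fw in auto)
  have "(\<lambda>N. f (\<Sum>k<N. w k)) \<longlonglongrightarrow> (\<Sum>k. f (w k))"
    using summable_LIMSEQ[OF summable_norm_cancel[OF sn]] by (simp add: linear_sum[OF lin])
  with sums have fx: "f x = (\<Sum>k. f (w k))" by (rule cl)
  have "norm (f x) \<le> (\<Sum>k. norm (f (w k)))" unfolding fx using sn by (rule summable_norm)
  also have "\<dots> \<le> (\<Sum>k. M * norm x * (1/2) ^ k)" by (rule suminf_le[OF fw sn geom])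
  also have "\<dots> = 2 * M * norm x" by (simp add: suminf_mult suminf_geometric)
  finally show ?thesis .
qed

theorem closed_graph_bound:
  fixes f :: "'a::banach \<Rightarrow> 'b::banach"
  assumes lin: "linear f"
    and cl: "\<And>X x z. X \<longlonglongrightarrow> x \<Longrightarrow> (\<lambda>n. f (X n)) \<longlonglongrightarrow> z \<Longrightarrow> f x = z"
  shows "\<exists>K\<ge>0. \<forall>x. norm (f x) \<le> K * norm x"
proof -
  obtain M where "M \<ge> 0" "\<And>z e. e > 0 \<Longrightarrow> \<exists>w. norm (f w) \<le> M * norm z \<and> norm (z - w) < e"
    using linear_approximately_bounded[OF lin] by blast
  then show ?thesis
    using approximately_bounded_closed_graph[OF lin cl] by (intro exI[of _ "2 * M"]) auto
qed

definition seq_closed :: "'a::topological_space lop \<Rightarrow> bool" where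
  "seq_closed A \<longleftrightarrow> (\<forall>X x z. (\<forall>n. X n \<in> fst A) \<longrightarrow> X \<longlonglongrightarrow> x \<longrightarrow> (\<lambda>n. snd A (X n)) \<longlonglongrightarrow> z
      \<longrightarrow> x \<in> fst A \<and> snd A x = z)"

lemma seq_closedD:
  assumes "seq_closed A" "\<And>n. X n \<in> fst A" "X \<longlonglongrightarrow> x" "(\<lambda>n. snd A (X n)) \<longlonglongrightarrow> z"
  shows "x \<in> fst A" "snd A x = z"
  using assms unfolding seq_closed_def by blast+

lemma closed_op_seq_closed:
  fixes T :: "'a::real_normed_vector lop"
  assumes "closed_op T" shows "seq_closed T"
  unfolding seq_closed_def
proof (intro allI impI)
  fix X x z assume Xin: "\<forall>n. X n \<in> fst T" and X: "X \<longlonglongrightarrow> x" and Z: "(\<lambda>n. snd T (X n)) \<longlonglongrightarrow> z"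
  let ?G = "{(x, snd T x) | x. x \<in> fst T}"
  have "closed ?G" using assms by (simp add: closed_op_def)
  moreover have "\<forall>n. (X n, snd T (X n)) \<in> ?G" using Xin by blast
  moreover have "(\<lambda>n. (X n, snd T (X n))) \<longlonglongrightarrow> (x, z)" by (intro tendsto_Pair X Z)
  ultimately have "(x, z) \<in> ?G"
    unfolding closed_sequential_limits by (elim allE[of _ "\<lambda>n. (X n, snd T (X n))"]) simp
  then show "x \<in> fst T \<and> snd T x = z" by auto
qed

locale cstruct =
  fixes J :: "'a::real_normed_vector \<Rightarrow> 'a"
  assumes cs: "complex_structure J"
begin

lemma J_linear: "linear J" using cs by (simp add: complex_structure_def)
lemma JJ: "J (J x) = - x" using cs by (simp add: complex_structure_def)
lemma norm_cscale: "norm (cscale J c x) = cmod c * norm x" using cs by (simp add: complex_structure_def)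

lemma cscale_add_right: "cscale J c (x + y) = cscale J c x + cscale J c y"
  by (simp add: cscale_def linear_add[OF J_linear] algebra_simps)
lemma cscale_diff_right: "cscale J c (x - y) = cscale J c x - cscale J c y"
  by (simp add: cscale_def linear_diff[OF J_linear] algebra_simps)
lemma cscale_diff_left: "cscale J (a - b) x = cscale J a x - cscale J b x"
  by (simp add: cscale_def algebra_simps)
lemma cscale_zero_right [simp]: "cscale J c 0 = 0"
  by (simp add: cscale_def linear_0[OF J_linear])
lemma cscale_of_real: "cscale J (complex_of_real r) x = r *\<^sub>R x"
  by (simp add: cscale_def)
lemma cscale_scaleR: "cscale J c (r *\<^sub>R x) = r *\<^sub>R cscale J c x"
  by (simp add: cscale_def linear_scale[OF J_linear] algebra_simps)
lemma cscale_mult: "cscale J a (cscale J b x) = cscale J (a * b) x"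
  by (simp add: cscale_def linear_add[OF J_linear] linear_scale[OF J_linear] JJ algebra_simps)

lemma cscale_cancel: "c \<noteq> 0 \<Longrightarrow> cscale J c x = 0 \<Longrightarrow> x = 0"
  using norm_cscale[of c x] by simp

context
  fixes A :: "'a lop"
  assumes lin: "linear_op J A"
begin

lemma dom_0: "0 \<in> fst A"
  and dom_add: "x \<in> fst A \<Longrightarrow> y \<in> fst A \<Longrightarrow> x + y \<in> fst A"
  and dom_cscale: "x \<in> fst A \<Longrightarrow> cscale J c x \<in> fst A"
  using lin by (simp_all add: linear_op_def csubspace_def)

lemma op_add: "x \<in> fst A \<Longrightarrow> y \<in> fst A \<Longrightarrow> snd A (x + y) = snd A x + snd A y"
  and op_cscale: "x \<in> fst A \<Longrightarrow> snd A (cscale J c x) = cscale J c (snd A x)"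
  using lin by (simp_all add: linear_op_def)

lemma dom_diff: "x \<in> fst A \<Longrightarrow> y \<in> fst A \<Longrightarrow> x - y \<in> fst A"
  using dom_add[of x "cscale J (-1) y"] dom_cscale[of y "-1"] by (simp add: cscale_def)

lemma op_scaleR: "x \<in> fst A \<Longrightarrow> snd A (r *\<^sub>R x) = r *\<^sub>R snd A x"
  using op_cscale[of x "complex_of_real r"] by (simp add: cscale_of_real)

lemma op_0: "snd A 0 = 0"
  using op_scaleR[OF dom_0, of 0] by simp

lemma op_diff: "x \<in> fst A \<Longrightarrow> y \<in> fst A \<Longrightarrow> snd A (x - y) = snd A x - snd A y"
  using op_add[of x "cscale J (-1) y"] op_cscale[of y "-1"] dom_cscale[of y "-1"]
  by (simp add: cscale_def)

end

lemma op_comp_simps: "fst (op_comp B A) = {x \<in> fst A. snd A x \<in> fst B}" "snd (op_comp B A) x = snd B (snd A x)"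
  by (simp_all add: op_comp_def)

lemma op_comp_linear:
  assumes a: "linear_op J A" and b: "linear_op J B"
  shows "linear_op J (op_comp B A)"
  unfolding linear_op_def csubspace_def op_comp_simps
  by (simp add: dom_0 op_0 dom_add op_add dom_cscale op_cscale a b)

context
  fixes S :: "'a lop" and l :: complex
  assumes lin: "linear_op J S" and lr: "l \<in> resolvent_set J S"
begin

lemma res_inj: "inj_on (\<lambda>x. snd S x - cscale J l x) (fst S)"
  and res_surj: "y \<in> (\<lambda>x. snd S x - cscale J l x) ` fst S"
  using lr by (simp_all add: resolvent_set_def bij_betw_def)

lemma res_in: "resolvent J S l y \<in> fst S"
  unfolding resolvent_def by (rule the_inv_into_into[OF res_inj res_surj subset_refl])

lemma res_eq: "snd S (resolvent J S l y) - cscale J l (resolvent J S l y) = y"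
  unfolding resolvent_def by (rule f_the_inv_into_f[OF res_inj res_surj])

lemma res_unique: "x \<in> fst S \<Longrightarrow> snd S x - cscale J l x = y \<Longrightarrow> resolvent J S l y = x"
  unfolding resolvent_def using the_inv_into_f_f[OF res_inj] by blast

lemma res_add: "resolvent J S l (y + z) = resolvent J S l y + resolvent J S l z"
proof (rule res_unique)
  let ?u = "resolvent J S l y" and ?v = "resolvent J S l z"
  show "?u + ?v \<in> fst S" by (rule dom_add[OF lin res_in res_in])
  have "snd S (?u + ?v) - cscale J l (?u + ?v) = (snd S ?u - cscale J l ?u) + (snd S ?v - cscale J l ?v)"
    by (simp add: op_add[OF lin res_in res_in] cscale_add_right)
  then show "snd S (?u + ?v) - cscale J l (?u + ?v) = y + z" by (simp add: res_eq)
qed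

lemma res_scaleR: "resolvent J S l (r *\<^sub>R y) = r *\<^sub>R resolvent J S l y"
proof (rule res_unique)
  let ?u = "resolvent J S l y"
  show "r *\<^sub>R ?u \<in> fst S"
    using dom_cscale[OF lin res_in, of "complex_of_real r"] by (simp add: cscale_of_real)
  have "snd S (r *\<^sub>R ?u) - cscale J l (r *\<^sub>R ?u) = r *\<^sub>R (snd S ?u - cscale J l ?u)"
    by (simp add: op_scaleR[OF lin res_in] cscale_scaleR scaleR_diff_right)
  then show "snd S (r *\<^sub>R ?u) - cscale J l (r *\<^sub>R ?u) = r *\<^sub>R y" by (simp add: res_eq)
qed

lemma res_bounded_linear: "bounded_linear (resolvent J S l)"
proof -
  obtain C where "\<forall>y. norm (resolvent J S l y) \<le> C * norm y" using lr by (auto simp: resolvent_set_def)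
  then show ?thesis
    by (intro bounded_linear_intro[where K=C]) (simp_all add: res_add res_scaleR mult.commute)
qed

lemma res_norm_le: "norm (resolvent J S l y) \<le> max 1 (onorm (resolvent J S l)) * norm y"
  using onorm[OF res_bounded_linear, of y] by (rule order_trans) (simp add: mult_right_mono)

end

lemma resolvent_setI:
  assumes lin: "linear_op J S"
    and inj: "\<And>x. x \<in> fst S \<Longrightarrow> snd S x - cscale J l x = 0 \<Longrightarrow> x = 0"
    and X: "\<And>y. X y \<in> fst S \<and> snd S (X y) - cscale J l (X y) = y"
    and bd: "\<And>y. norm (X y) \<le> C * norm y"
  shows "l \<in> resolvent_set J S \<and> (\<forall>y. resolvent J S l y = X y)"
proof -
  have injo: "inj_on (\<lambda>x. snd S x - cscale J l x) (fst S)"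
  proof (rule inj_onI)
    fix x x' assume xs: "x \<in> fst S" "x' \<in> fst S"
      and "snd S x - cscale J l x = snd S x' - cscale J l x'"
    then have "snd S (x - x') - cscale J l (x - x') = 0"
      by (simp add: op_diff[OF lin xs] cscale_diff_right algebra_simps)
    then show "x = x'" using inj dom_diff[OF lin xs] by fastforce
  qed
  have "(\<lambda>x. snd S x - cscale J l x) ` fst S = UNIV"
    using X by (metis (no_types, lifting) UNIV_eq_I image_eqI)
  with injo have bij: "bij_betw (\<lambda>x. snd S x - cscale J l x) (fst S) UNIV"
    by (simp add: bij_betw_def)
  have R: "resolvent J S l y = X y" for y
    unfolding resolvent_def using the_inv_into_f_f[OF injo, of "X y"] X[of y] by simp
  then show ?thesis using bij bd unfolding resolvent_set_def by auto
qed

lemma resolvent_identity: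
  assumes lin: "linear_op J S" and a: "a \<in> resolvent_set J S" and b: "b \<in> resolvent_set J S"
  shows "resolvent J S b y = resolvent J S a (y + cscale J (b - a) (resolvent J S b y))"
proof (rule res_unique[OF lin a, symmetric])
  let ?x = "resolvent J S b y"
  show "?x \<in> fst S" by (rule res_in[OF lin b])
  have "snd S ?x - cscale J a ?x = (snd S ?x - cscale J b ?x) + cscale J (b - a) ?x"
    by (simp add: cscale_diff_left algebra_simps)
  then show "snd S ?x - cscale J a ?x = y + cscale J (b - a) ?x"
    by (simp add: res_eq[OF lin b])
qed

section \<open>The resolvent of BA expressed through the resolvent of AB\<close>

definition swap_resolvent :: "'a lop \<Rightarrow> 'a lop \<Rightarrow> complex \<Rightarrow> complex \<Rightarrow> 'a \<Rightarrow> 'a" where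
  "swap_resolvent A B l m y =
     resolvent J (op_comp B A) m y
     + cscale J ((l - m) / l) (snd B (resolvent J (op_comp A B) l (snd A (resolvent J (op_comp B A) m y)))
                               - resolvent J (op_comp B A) m y)"

context
  fixes A B :: "'a lop"
  assumes linA: "linear_op J A" and linB: "linear_op J B"
begin

lemma linAB: "linear_op J (op_comp A B)" by (rule op_comp_linear[OF linB linA])
lemma linBA: "linear_op J (op_comp B A)" by (rule op_comp_linear[OF linA linB])

lemma resolvent_comp_in_dom: "k \<in> resolvent_set J (op_comp B A) \<Longrightarrow> resolvent J (op_comp B A) k y \<in> fst A"
  using res_in[OF linBA] by (simp add: op_comp_simps)

context
  fixes l :: complex
  assumes l0: "l \<noteq> 0" and lAB: "l \<in> resolvent_set J (op_comp A B)"
begin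

text \<open>BA - l is injective: if BAx = lx then Ax solves (AB - l)Ax = 0, so Ax = 0 and lx = 0.\<close>
lemma comp_minus_injective:
  assumes x: "x \<in> fst (op_comp B A)" "snd (op_comp B A) x - cscale J l x = 0"
  shows "x = 0"
proof -
  have xA: "x \<in> fst A" and BAx: "snd B (snd A x) = cscale J l x"
    using x by (simp_all add: op_comp_simps)
  have "snd A x \<in> fst (op_comp A B)"
    using x BAx dom_cscale[OF linA xA] by (simp add: op_comp_simps)
  moreover have "snd (op_comp A B) (snd A x) - cscale J l (snd A x) = 0"
    by (simp add: op_comp_simps BAx op_cscale[OF linA xA])
  ultimately have "resolvent J (op_comp A B) l 0 = snd A x"
    by (rule res_unique[OF linAB lAB])
  moreover have "resolvent J (op_comp A B) l 0 = 0"
    by (rule res_unique[OF linAB lAB dom_0[OF linAB]]) (simp add: op_comp_simps op_0 linA linB)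
  ultimately have "cscale J l x = 0" using BAx op_0[OF linB] by simp
  then show "x = 0" using l0 by (rule cscale_cancel[rotated])
qed

lemma swap_resolvent_solves:
  assumes mBA: "m \<in> resolvent_set J (op_comp B A)"
  shows "swap_resolvent A B l m y \<in> fst (op_comp B A)
    \<and> snd (op_comp B A) (swap_resolvent A B l m y) - cscale J l (swap_resolvent A B l m y) = y"
proof -
  define x0 where "x0 = resolvent J (op_comp B A) m y"
  define u where "u = resolvent J (op_comp A B) l (snd A x0)"
  define c where "c = (l - m) / l"
  have X: "swap_resolvent A B l m y = x0 + cscale J c (snd B u - x0)"
    by (simp add: swap_resolvent_def x0_def u_def c_def)
  have x0: "x0 \<in> fst A" "snd A x0 \<in> fst B" "snd B (snd A x0) - cscale J m x0 = y"
    using res_in[OF linBA mBA, of y] res_eq[OF linBA mBA, of y] by (simp_all add: x0_def op_comp_simps)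
  have u: "u \<in> fst B" "snd B u \<in> fst A" "snd A (snd B u) - cscale J l u = snd A x0"
    using res_in[OF linAB lAB] res_eq[OF linAB lAB] by (simp_all add: u_def op_comp_simps)
  have cl: "c * l = l - m" "l * c = l - m" using l0 by (simp_all add: c_def)
  have v: "snd B u - x0 \<in> fst A" by (rule dom_diff[OF linA u(2) x0(1)])
  have dA: "x0 + cscale J c (snd B u - x0) \<in> fst A"
    by (rule dom_add[OF linA x0(1) dom_cscale[OF linA v]])
  have "snd A (x0 + cscale J c (snd B u - x0)) = snd A x0 + cscale J c (snd A (snd B u) - snd A x0)"
    by (simp add: op_add[OF linA x0(1) dom_cscale[OF linA v]] op_cscale[OF linA v]
         op_diff[OF linA u(2) x0(1)])
  also have "snd A (snd B u) - snd A x0 = cscale J l u"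
    using u(3) by (simp add: algebra_simps)
  finally have AX: "snd A (x0 + cscale J c (snd B u - x0)) = snd A x0 + cscale J (l - m) u"
    by (simp add: cscale_mult cl)
  have dB: "snd A x0 + cscale J (l - m) u \<in> fst B"
    by (rule dom_add[OF linB x0(2) dom_cscale[OF linB u(1)]])
  have BAX: "snd B (snd A x0 + cscale J (l - m) u) = snd B (snd A x0) + cscale J (l - m) (snd B u)"
    by (simp add: op_add[OF linB x0(2) dom_cscale[OF linB u(1)]] op_cscale[OF linB u(1)])
  have lX: "cscale J l (x0 + cscale J c (snd B u - x0))
      = cscale J l x0 + cscale J (l - m) (snd B u) - cscale J (l - m) x0"
    by (simp add: cscale_add_right cscale_diff_right cscale_mult cl)
  have "snd B (snd A x0 + cscale J (l - m) u) - cscale J l (x0 + cscale J c (snd B u - x0))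
      = snd B (snd A x0) - cscale J m x0"
    unfolding BAX lX by (simp add: cscale_diff_left algebra_simps)
  then show ?thesis using X dA dB AX x0(3) by (simp add: op_comp_simps)
qed

lemma swap_resolvent_norm:
  assumes mBA: "m \<in> resolvent_set J (op_comp B A)"
    and a: "\<And>y. norm (snd A (resolvent J (op_comp B A) m y)) \<le> a * norm y"
    and b: "\<And>z. norm (snd B (resolvent J (op_comp A B) l z)) \<le> b * norm z" and b0: "b \<ge> 0"
    and N: "N = max 1 (onorm (resolvent J (op_comp B A) m))"
  shows "norm (swap_resolvent A B l m y) \<le> (N + cmod ((l - m) / l) * (b * a + N)) * norm y"
proof -
  let ?x0 = "resolvent J (op_comp B A) m y"
  have x0: "norm ?x0 \<le> N * norm y" using res_norm_le[OF linBA mBA] N by simp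
  have Bu: "norm (snd B (resolvent J (op_comp A B) l (snd A ?x0))) \<le> b * (a * norm y)"
    using b[of "snd A ?x0"] mult_left_mono[OF a[of y] b0] by linarith
  have "norm (swap_resolvent A B l m y)
      \<le> norm ?x0 + cmod ((l - m) / l) * (norm (snd B (resolvent J (op_comp A B) l (snd A ?x0))) + norm ?x0)"
    unfolding swap_resolvent_def
    by (rule order_trans[OF norm_triangle_ineq]) (simp add: norm_cscale mult_left_mono norm_triangle_ineq4)
  also have "\<dots> \<le> N * norm y + cmod ((l - m) / l) * (b * (a * norm y) + N * norm y)"
    using x0 Bu by (intro add_mono mult_left_mono) auto
  finally show ?thesis by (simp add: algebra_simps)
qed

end

end

end

text \<open>From now on the space is complete, so that the closed graph theorem applies.\<close>
locale banach_cstruct = cstruct J for J :: "'a::banach \<Rightarrow> 'a"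
begin

lemma closed_after_bounded:
  fixes R :: "'a \<Rightarrow> 'a"
  assumes lin: "linear_op J A" and cl: "seq_closed A"
    and bl: "bounded_linear R" and into: "\<And>y. R y \<in> fst A"
  shows "\<exists>K\<ge>0. \<forall>y. norm (snd A (R y)) \<le> K * norm y"
proof (rule closed_graph_bound[where f="\<lambda>y. snd A (R y)"])
  interpret R: bounded_linear R by (rule bl)
  show "linear (\<lambda>y. snd A (R y))"
    by (rule linearI) (simp_all add: R.add R.scaleR op_add[OF lin into into] op_scaleR[OF lin into])
  fix X x z assume "X \<longlonglongrightarrow> x" and "(\<lambda>n. snd A (R (X n))) \<longlonglongrightarrow> z"
  then show "snd A (R x) = z" using seq_closedD(2)[OF cl into] R.tendsto by blast
qed

lemma resolvent_swap:
  assumes linA: "linear_op J A" and linB: "linear_op J B"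
    and clA: "seq_closed A" and clB: "seq_closed B"
    and l0: "l \<noteq> 0" and lAB: "l \<in> resolvent_set J (op_comp A B)"
    and mBA: "m \<in> resolvent_set J (op_comp B A)"
  shows "l \<in> resolvent_set J (op_comp B A)"
    and "resolvent J (op_comp B A) l y = swap_resolvent A B l m y"
proof -
  note linAB = linAB[OF linA linB] and linBA = linBA[OF linA linB]
  obtain a where a: "\<And>y. norm (snd A (resolvent J (op_comp B A) m y)) \<le> a * norm y"
    using closed_after_bounded[OF linA clA res_bounded_linear[OF linBA mBA]
        resolvent_comp_in_dom[OF linA linB mBA]] by blast
  obtain b where b0: "b \<ge> 0" and b: "\<And>z. norm (snd B (resolvent J (op_comp A B) l z)) \<le> b * norm z"
    using closed_after_bounded[OF linB clB res_bounded_linear[OF linAB lAB]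
        resolvent_comp_in_dom[OF linB linA lAB]] by blast
  have "l \<in> resolvent_set J (op_comp B A)
      \<and> (\<forall>y. resolvent J (op_comp B A) l y = swap_resolvent A B l m y)"
  proof (rule resolvent_setI[OF linBA])
    show "x = 0" if "x \<in> fst (op_comp B A)" "snd (op_comp B A) x - cscale J l x = 0" for x
      using comp_minus_injective[OF linA linB l0 lAB that] .
    show "swap_resolvent A B l m y \<in> fst (op_comp B A)
      \<and> snd (op_comp B A) (swap_resolvent A B l m y) - cscale J l (swap_resolvent A B l m y) = y" for y
      by (rule swap_resolvent_solves[OF linA linB l0 lAB mBA])
    show "norm (swap_resolvent A B l m y) \<le> (max 1 (onorm (resolvent J (op_comp B A) m))
        + cmod ((l - m) / l) * (b * a + max 1 (onorm (resolvent J (op_comp B A) m)))) * norm y" for y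
      by (rule swap_resolvent_norm[OF linA linB l0 lAB mBA a b b0 refl])
  qed
  then show "l \<in> resolvent_set J (op_comp B A)" "resolvent J (op_comp B A) l y = swap_resolvent A B l m y"
    by auto
qed

lemma shifted_resolvent_bound:
  assumes linA: "linear_op J A" and linS: "linear_op J S"
    and into: "\<And>y. resolvent J S n y \<in> fst A" and nS: "n \<in> resolvent_set J S"
    and K: "K \<ge> 0" "\<And>y. norm (snd A (resolvent J S n y)) \<le> K * norm y"
    and mS: "m \<in> resolvent_set J S"
  shows "norm (snd A (resolvent J S m y))
    \<le> K * (1 + cmod (m - n)) * max 1 (onorm (resolvent J S m)) * norm y"
proof -
  let ?M = "max 1 (onorm (resolvent J S m))"
  have "norm (snd A (resolvent J S m y)) \<le> K * norm (y + cscale J (m - n) (resolvent J S m y))"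
    using K(2) resolvent_identity[OF linS nS mS] by metis
  also have "\<dots> \<le> K * (?M * norm y + cmod (m - n) * (?M * norm y))"
  proof (intro mult_left_mono K(1))
    have "norm y \<le> ?M * norm y" using mult_right_mono[of 1 ?M "norm y"] by simp
    then show "norm (y + cscale J (m - n) (resolvent J S m y)) \<le> ?M * norm y + cmod (m - n) * (?M * norm y)"
      using res_norm_le[OF linS mS, of y]
      by (intro order_trans[OF norm_triangle_ineq] add_mono) (simp_all add: norm_cscale mult_left_mono)
  qed
  finally show ?thesis by (simp add: algebra_simps)
qed

end

text \<open>Controls the factor 1 + |l - n| from the resolvent identity by 2 + |l|.\<close>
lemma shift_factor_bound: "1 + cmod (l - n) \<le> (1 + cmod n) * (2 + cmod l)"
proof -
  have "(1 + cmod n) * (2 + cmod l) = 2 + cmod l + 2 * cmod n + cmod n * cmod l"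
    by (simp add: algebra_simps)
  moreover have "cmod (l - n) \<le> cmod l + cmod n" by (rule norm_triangle_ineq4)
  moreover have "0 \<le> cmod n * cmod l" "0 \<le> cmod n" by simp_all
  ultimately show ?thesis by linarith
qed

text \<open>The scalar inequality turning the norm bound of the swap formula into the stated form; Q
  stands for the product of the bounds of A (BA - m)\<inverse> and B (AB - l)\<inverse>.\<close>
lemma swap_bound_arith:
  fixes l m :: complex
  assumes l0: "l \<noteq> 0" and M1: "M1 \<ge> 1" and M2: "M2 \<ge> 1" and K: "K \<ge> 0"
    and Q: "Q \<le> K * ((2 + cmod l) * (2 + cmod m)) * M1 * M2"
  shows "M2 + cmod ((l - m) / l) * (Q + M2)
    \<le> (1 + K) * M1 * M2 / cmod l * (cmod m + cmod (l - m) * (2 + cmod l) * (2 + cmod m))"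
proof -
  define a d P where "a = cmod l" and "d = cmod (l - m)" and "P = (2 + cmod l) * (2 + cmod m)"
  have a: "a > 0" using l0 by (simp add: a_def)
  have d: "d \<ge> 0" by (simp add: d_def)
  have P: "P \<ge> 4" using mult_mono[of 2 "2 + cmod l" 2 "2 + cmod m"] by (simp add: P_def)
  have tri: "a \<le> cmod m + d" using norm_triangle_ineq[of m "l - m"] by (simp add: a_def d_def)
  have "a * M2 + d * M2 = (a + d) * M2" by (simp add: algebra_simps)
  also have "\<dots> \<le> (cmod m + d * P) * M2"
    using tri M2 mult_left_mono[of 2 P d] P d by (intro mult_right_mono) auto
  also have "\<dots> = (cmod m + d * P) * M2 * 1" by simp
  also have "\<dots> \<le> (cmod m + d * P) * M2 * M1" using M1 M2 d P by (intro mult_left_mono) auto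
  finally have h1: "a * M2 + d * M2 \<le> (cmod m + d * P) * M1 * M2" by (simp add: algebra_simps)
  have "d * Q \<le> d * (K * P * M1 * M2)" using Q d by (intro mult_left_mono) (simp_all add: P_def)
  also have "\<dots> \<le> K * M1 * M2 * (cmod m + d * P)"
    using mult_nonneg_nonneg[of "K * M1 * M2" "cmod m"] K M1 M2 by (simp add: algebra_simps)
  finally have h2: "d * Q \<le> K * M1 * M2 * (cmod m + d * P)" .
  have "M2 + cmod ((l - m) / l) * (Q + M2) = (a * M2 + d * M2 + d * Q) / a"
    using a by (simp add: a_def d_def norm_divide field_simps)
  also have "\<dots> \<le> ((1 + K) * M1 * M2 * (cmod m + d * P)) / a"
    using h1 h2 a by (intro divide_right_mono) (auto simp: algebra_simps)
  finally show ?thesis by (simp add: a_def d_def P_def mult.assoc)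
qed

context banach_cstruct
begin

lemma resolvent_estimate_at:
  assumes linA: "linear_op J A" and linB: "linear_op J B"
    and clA: "seq_closed A" and clB: "seq_closed B"
    and n0: "n0 \<in> resolvent_set J (op_comp B A)" and n1: "n1 \<in> resolvent_set J (op_comp A B)"
    and KA: "KA \<ge> 0" "\<And>y. norm (snd A (resolvent J (op_comp B A) n0 y)) \<le> KA * norm y"
    and KB: "KB \<ge> 0" "\<And>y. norm (snd B (resolvent J (op_comp A B) n1 y)) \<le> KB * norm y"
    and l: "l \<in> resolvent_set J (op_comp B A)" and m: "m \<in> resolvent_set J (op_comp B A)"
    and l0: "l \<noteq> 0" and K: "K = KA * KB * (1 + cmod n0) * (1 + cmod n1)"
  shows "onorm (resolvent J (op_comp B A) l)
      \<le> (1 + K) * max 1 (onorm (resolvent J (op_comp A B) l)) * max 1 (onorm (resolvent J (op_comp B A) m))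
          / cmod l * (cmod m + cmod (l - m) * (2 + cmod l) * (2 + cmod m))"
proof -
  note linAB = linAB[OF linA linB] and linBA = linBA[OF linA linB]
  have lAB: "l \<in> resolvent_set J (op_comp A B)" by (rule resolvent_swap(1)[OF linB linA clB clA l0 l n1])
  define M1 where "M1 = max 1 (onorm (resolvent J (op_comp A B) l))"
  define M2 where "M2 = max 1 (onorm (resolvent J (op_comp B A) m))"
  define a where "a = KA * (1 + cmod (m - n0)) * M2"
  define b where "b = KB * (1 + cmod (l - n1)) * M1"
  have "b * a = (KA * KB * M1 * M2) * ((1 + cmod (l - n1)) * (1 + cmod (m - n0)))"
    by (simp add: a_def b_def algebra_simps)
  also have "\<dots> \<le> (KA * KB * M1 * M2) * (((1 + cmod n1) * (2 + cmod l)) * ((1 + cmod n0) * (2 + cmod m)))"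
    using KA(1) KB(1) by (intro mult_left_mono mult_mono shift_factor_bound) (auto simp: M1_def M2_def)
  finally have ba: "b * a \<le> K * ((2 + cmod l) * (2 + cmod m)) * M1 * M2"
    by (simp add: K algebra_simps)
  have bA: "norm (snd A (resolvent J (op_comp B A) m y)) \<le> a * norm y" for y
    unfolding a_def M2_def
    by (rule shifted_resolvent_bound[OF linA linBA resolvent_comp_in_dom[OF linA linB n0] n0 KA m])
  have bB: "norm (snd B (resolvent J (op_comp A B) l z)) \<le> b * norm z" for z
    unfolding b_def M1_def
    by (rule shifted_resolvent_bound[OF linB linAB resolvent_comp_in_dom[OF linB linA n1] n1 KB lAB])
  have b0: "b \<ge> 0" using KB(1) by (simp add: b_def M1_def)
  have K0: "K \<ge> 0" using KA(1) KB(1) by (simp add: K)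
  have "norm (resolvent J (op_comp B A) l y) \<le> (M2 + cmod ((l - m) / l) * (b * a + M2)) * norm y" for y
    unfolding resolvent_swap(2)[OF linA linB clA clB l0 lAB m]
    by (rule swap_resolvent_norm[OF linA linB l0 lAB m bA bB b0 M2_def])
  then have "onorm (resolvent J (op_comp B A) l) \<le> M2 + cmod ((l - m) / l) * (b * a + M2)"
    using KA(1) b0 by (intro onorm_bound) (auto simp: a_def M2_def)
  also have "\<dots> \<le> (1 + K) * M1 * M2 / cmod l * (cmod m + cmod (l - m) * (2 + cmod l) * (2 + cmod m))"
    by (rule swap_bound_arith[OF l0 _ _ K0 ba]) (simp_all add: M1_def M2_def)
  finally show ?thesis by (simp add: M1_def M2_def)
qed

lemma resolvent_estimate:
  assumes linA: "linear_op J A" and linB: "linear_op J B"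
    and clA: "seq_closed A" and clB: "seq_closed B"
    and n0: "n0 \<in> resolvent_set J (op_comp B A)" and n1: "n1 \<in> resolvent_set J (op_comp A B)"
  shows "\<exists>C>0. \<forall>l\<in>resolvent_set J (op_comp B A). \<forall>m\<in>resolvent_set J (op_comp B A).
          l \<noteq> 0 \<longrightarrow>
          onorm (resolvent J (op_comp B A) l)
            \<le> C * max 1 (onorm (resolvent J (op_comp A B) l))
                * max 1 (onorm (resolvent J (op_comp B A) m)) / cmod l
              * (cmod m + cmod (l - m) * (2 + cmod l) * (2 + cmod m))"
proof -
  obtain KA where KA: "KA \<ge> 0" "\<And>y. norm (snd A (resolvent J (op_comp B A) n0 y)) \<le> KA * norm y"
    using closed_after_bounded[OF linA clA res_bounded_linear[OF linBA[OF linA linB] n0]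
        resolvent_comp_in_dom[OF linA linB n0]] by blast
  obtain KB where KB: "KB \<ge> 0" "\<And>y. norm (snd B (resolvent J (op_comp A B) n1 y)) \<le> KB * norm y"
    using closed_after_bounded[OF linB clB res_bounded_linear[OF linAB[OF linA linB] n1]
        resolvent_comp_in_dom[OF linB linA n1]] by blast
  define K where "K = KA * KB * (1 + cmod n0) * (1 + cmod n1)"
  have "K \<ge> 0" using KA KB by (simp add: K_def)
  then show ?thesis
    using resolvent_estimate_at[OF linA linB clA clB n0 n1 KA KB _ _ _ K_def]
    by (intro exI[of _ "1 + K"]) auto
qed

end

section \<open>The Krein space adjoint\<close>

locale krein =
  fixes J :: "'a::banach \<Rightarrow> 'a" and ip :: "'a \<Rightarrow> 'a \<Rightarrow> complex"
  assumes ks: "krein_space J ip"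

sublocale krein \<subseteq> banach_cstruct J
  using ks by unfold_locales (simp add: krein_space_def)

context krein
begin

lemma hermitian: "hermitian_form J ip"
  using ks by (simp add: krein_space_def)

lemma ip_add1: "ip (x + y) z = ip x z + ip y z"
  and ip_cscale1: "ip (cscale J c x) y = c * ip x y"
  and ip_conj: "ip y x = cnj (ip x y)"
  using hermitian unfolding hermitian_form_def by blast+

lemma ip_add2: "ip x (y + z) = ip x y + ip x z"
  by (simp add: ip_conj[of x] ip_add1)
lemma ip_cscale2: "ip x (cscale J c y) = cnj c * ip x y"
  by (simp add: ip_conj[of x] ip_cscale1)
lemma ip_diff2: "ip x (y - z) = ip x y - ip x z"
  using ip_add2[of x y "cscale J (-1) z"] ip_cscale2[of x "-1" z] by (simp add: cscale_def)
lemma ip_zero2: "ip x 0 = 0"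
  using ip_diff2[of x 0 0] by simp

lemma ip_tendsto2:
  assumes Y: "Y \<longlonglongrightarrow> y" shows "(\<lambda>n. ip a (Y n)) \<longlonglongrightarrow> ip a y"
proof -
  have "\<exists>c. \<forall>x y. cmod (ip x y) \<le> c * norm x * norm y"
    using ks by (simp add: krein_space_def)
  then obtain c where c: "\<And>x y. cmod (ip x y) \<le> c * norm x * norm y" by blast
  have "(\<lambda>n. ip a (Y n) - ip a y) \<longlonglongrightarrow> 0"
  proof (rule Lim_null_comparison[where g="\<lambda>n. (c * norm a) * norm (Y n - y)"])
    show "\<forall>\<^sub>F n in sequentially. norm (ip a (Y n) - ip a y) \<le> c * norm a * norm (Y n - y)"
      using c by (simp add: ip_diff2[symmetric])
    show "(\<lambda>n. (c * norm a) * norm (Y n - y)) \<longlonglongrightarrow> 0"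
      using Y by (intro tendsto_mult_right_zero tendsto_norm_zero LIM_zero)
  qed
  then show ?thesis by (rule LIM_zero_cancel)
qed

lemma ip_tendsto1: "X \<longlonglongrightarrow> x \<Longrightarrow> (\<lambda>n. ip (X n) w) \<longlonglongrightarrow> ip x w"
  using tendsto_cnj[OF ip_tendsto2[of X x w]] by (simp add: ip_conj[of w])

text \<open>A Krein space form is nondegenerate: decompose w = p + m along a fundamental
  decomposition; testing against p and m gives [p,p] = [m,m] = 0, hence p = m = 0.\<close>
lemma nondegenerate: assumes "\<And>x. ip x w = 0" shows "w = 0"
proof -
  obtain Kp Km where dec: "\<forall>x. \<exists>p\<in>Kp. \<exists>m\<in>Km. x = p + m"
    and orth: "\<forall>p\<in>Kp. \<forall>m\<in>Km. ip p m = 0"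
    and hp: "hilbert_part ip 1 Kp" and hm: "hilbert_part ip (-1) Km"
    using ks unfolding krein_space_def by (elim conjE exE) blast
  obtain p m where pm: "p \<in> Kp" "m \<in> Km" "w = p + m" using dec by blast
  have pm0: "ip p m = 0" and mp0: "ip m p = 0" using orth pm ip_conj[of m p] by auto
  have pos: "x = 0" if "x \<in> Kp" "Re (ip x x) = 0" for x
    using hp that unfolding hilbert_part_def by fastforce
  have neg: "x = 0" if "x \<in> Km" "Re (ip x x) = 0" for x
    using hm that unfolding hilbert_part_def by fastforce
  have "ip p p = 0" using assms[of p] pm pm0 by (simp add: ip_add2)
  then have "p = 0" using pos pm(1) by simp
  moreover have "ip m m = 0" using assms[of m] pm mp0 by (simp add: ip_add2)
  then have "m = 0" using neg pm(2) by simp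
  ultimately show ?thesis using pm by simp
qed

text \<open>Nondegeneracy relative to a dense subspace, by continuity of the form.\<close>
lemma dense_nondegenerate:
  assumes dd: "densely_defined T" and h: "\<And>x. x \<in> fst T \<Longrightarrow> ip x w = 0" shows "w = 0"
proof (rule nondegenerate)
  fix x
  have "closed {x. ip x w = 0}"
    unfolding closed_sequential_limits
  proof (intro allI impI)
    fix X x0 assume "(\<forall>n. X n \<in> {x. ip x w = 0}) \<and> X \<longlonglongrightarrow> x0"
    then have "(\<lambda>n. 0) \<longlonglongrightarrow> ip x0 w" using ip_tendsto1[of X x0 w] by simp
    then show "x0 \<in> {x. ip x w = 0}" by (simp add: LIMSEQ_const_iff)
  qed
  moreover have "fst T \<subseteq> {x. ip x w = 0}" using h by blast
  ultimately have "closure (fst T) \<subseteq> {x. ip x w = 0}" by (simp add: closure_minimal)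
  then show "ip x w = 0" using dd unfolding densely_defined_def by blast
qed

context
  fixes T :: "'a lop"
  assumes dd: "densely_defined T"
begin

text \<open>Since dom T is dense, the adjoint is well defined: [Tx, y] = [x, z] for all x \<in> dom T
  determines z, which is then T[*] y.\<close>
lemma adj_char:
  assumes "\<forall>x\<in>fst T. ip (snd T x) y = ip x z"
  shows "y \<in> fst (kadj ip T)" "snd (kadj ip T) y = z"
proof -
  have unique: "z' = z" if "\<forall>x\<in>fst T. ip (snd T x) y = ip x z'" for z'
    using dense_nondegenerate[OF dd, of "z' - z"] that assms by (simp add: ip_diff2)
  show "y \<in> fst (kadj ip T)" using assms by (auto simp: kadj_def)
  show "snd (kadj ip T) y = z"
    unfolding kadj_def snd_conv
    by (rule the_equality[where P="\<lambda>z. \<forall>x\<in>fst T. ip (snd T x) y = ip x z", OF assms unique])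
qed

lemma adj_eq:
  assumes "y \<in> fst (kadj ip T)" "x \<in> fst T"
  shows "ip (snd T x) y = ip x (snd (kadj ip T) y)"
proof -
  obtain z where z: "\<forall>x\<in>fst T. ip (snd T x) y = ip x z" using assms(1) by (auto simp: kadj_def)
  then show ?thesis using adj_char(2)[OF z] assms(2) by simp
qed

lemma adj_linear: "linear_op J (kadj ip T)"
proof -
  let ?B = "kadj ip T"
  have "0 \<in> fst ?B" "snd ?B 0 = 0"
    using adj_char[of 0 0] by (simp_all add: ip_zero2)
  moreover have "y1 + y2 \<in> fst ?B" "snd ?B (y1 + y2) = snd ?B y1 + snd ?B y2"
    if "y1 \<in> fst ?B" "y2 \<in> fst ?B" for y1 y2
  proof -
    have "\<forall>x\<in>fst T. ip (snd T x) (y1 + y2) = ip x (snd ?B y1 + snd ?B y2)"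
      using adj_eq[OF that(1)] adj_eq[OF that(2)] by (simp add: ip_add2)
    then show "y1 + y2 \<in> fst ?B" "snd ?B (y1 + y2) = snd ?B y1 + snd ?B y2" by (rule adj_char)+
  qed
  moreover have "cscale J c y \<in> fst ?B" "snd ?B (cscale J c y) = cscale J c (snd ?B y)"
    if "y \<in> fst ?B" for c y
  proof -
    have "\<forall>x\<in>fst T. ip (snd T x) (cscale J c y) = ip x (cscale J c (snd ?B y))"
      using adj_eq[OF that] by (simp add: ip_cscale2)
    then show "cscale J c y \<in> fst ?B" "snd ?B (cscale J c y) = cscale J c (snd ?B y)" by (rule adj_char)+
  qed
  ultimately show ?thesis unfolding linear_op_def csubspace_def by simp
qed

text \<open>The adjoint is closed: [Tx, y] = [x, T[*] y] passes to limits by continuity of the form.\<close>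
lemma adj_seq_closed: "seq_closed (kadj ip T)"
  unfolding seq_closed_def
proof (intro allI impI)
  let ?B = "kadj ip T"
  fix Y y z assume Yin: "\<forall>n. Y n \<in> fst ?B" and Y: "Y \<longlonglongrightarrow> y" and Z: "(\<lambda>n. snd ?B (Y n)) \<longlonglongrightarrow> z"
  have "ip (snd T x) y = ip x z" if x: "x \<in> fst T" for x
  proof -
    have "(\<lambda>n. ip x (snd ?B (Y n))) \<longlonglongrightarrow> ip (snd T x) y"
      using ip_tendsto2[OF Y, of "snd T x"] adj_eq[OF _ x] Yin by simp
    then show ?thesis using ip_tendsto2[OF Z] LIMSEQ_unique by blast
  qed
  then show "y \<in> fst ?B \<and> snd ?B y = z" using adj_char by blast
qed

end

end

theorem theorem2p2:
  fixes J :: "'a::{real_normed_vector,banach} \<Rightarrow> 'a"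
    and ip :: "'a \<Rightarrow> 'a \<Rightarrow> complex"
    and T :: "'a lop"
  assumes "krein_space J ip"
    and "linear_op J T" and "closed_op T" and "densely_defined T"
    and "resolvent_set J (op_comp (kadj ip T) T) \<noteq> {}"
    and "resolvent_set J (op_comp T (kadj ip T)) \<noteq> {}"
  shows "spectrum_op J (op_comp (kadj ip T) T) - {0} = spectrum_op J (op_comp T (kadj ip T)) - {0}
    \<and> (\<exists>C>0. \<forall>l\<in>resolvent_set J (op_comp (kadj ip T) T). \<forall>m\<in>resolvent_set J (op_comp (kadj ip T) T).
          l \<noteq> 0 \<longrightarrow>
          onorm (resolvent J (op_comp (kadj ip T) T) l)
            \<le> C * max 1 (onorm (resolvent J (op_comp T (kadj ip T)) l))
                * max 1 (onorm (resolvent J (op_comp (kadj ip T) T) m)) / cmod l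
              * (cmod m + cmod (l - m) * (2 + cmod l) * (2 + cmod m)))"
proof -
  interpret krein J ip by unfold_locales (rule assms(1))
  let ?B = "kadj ip T"
  have linB: "linear_op J ?B" and clB: "seq_closed ?B"
    using adj_linear adj_seq_closed assms(4) by auto
  have clA: "seq_closed T" by (rule closed_op_seq_closed[OF assms(3)])
  obtain n0 n1 where n0: "n0 \<in> resolvent_set J (op_comp ?B T)" and n1: "n1 \<in> resolvent_set J (op_comp T ?B)"
    using assms(5,6) by blast
  have "l \<in> resolvent_set J (op_comp ?B T) \<longleftrightarrow> l \<in> resolvent_set J (op_comp T ?B)" if "l \<noteq> 0" for l
    using resolvent_swap(1)[OF linB assms(2) clB clA that _ n1]
      resolvent_swap(1)[OF assms(2) linB clA clB that _ n0] by blast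
  then have "spectrum_op J (op_comp ?B T) - {0} = spectrum_op J (op_comp T ?B) - {0}"
    unfolding spectrum_op_def by blast
  then show ?thesis using resolvent_estimate[OF assms(2) linB clA clB n0 n1] by blast
qed

end
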